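(* Let $(X,d)$ be an infinite u.l.f. metric space. Then the Higson corona $\nu X$ has at least $2^{2^{\aleph_0}}$ elements.
   Context: A metric space is u.l.f. if for every $r>0$ the cardinalities of its balls of radius $r$ are uniformly bounded. A Higson function is a bounded $f\colon X\to\mathbb{C}$ such that for all $\varepsilon,R>0$ there is a finite $F\subseteq X$ with $|f(x)-f(y)|<\varepsilon$ whenever $x,y\in X\setminus F$ and $d(x,y)<R$. These form a unital C*-algebra $C_h(X)\subseteq\ell_\infty(X)$; its spectrum $hX$ is the Higson compactification of $X$ (containing $X$), and the Higson corona is $\nu X=hX\setminus X$. *)

theory Defs
  imports "HOL-Analysis.Analysis"
begin

text \<open>Uniformly locally finite metric space (the whole type is the space).\<close>
definition ulf :: "'a::metric_space itself \<Rightarrow> bool" where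
  "ulf _ \<longleftrightarrow> (\<forall>r>0. \<exists>N::nat. \<forall>x::'a. finite (ball x r) \<and> card (ball x r) \<le> N)"

definition higson :: "('a::metric_space \<Rightarrow> complex) \<Rightarrow> bool" where
  "higson f \<longleftrightarrow> (\<exists>B. \<forall>x. cmod (f x) \<le> B) \<and>
     (\<forall>\<epsilon>>0. \<forall>R>0. \<exists>F. finite F \<and>
        (\<forall>x y. x \<notin> F \<and> y \<notin> F \<and> dist x y < R \<longrightarrow> cmod (f x - f y) < \<epsilon>))"

text \<open>Points of the spectrum of C_h(X): characters (unital multiplicative linear functionals
  on the algebra of Higson functions), represented extensionally (value 0 off C_h(X)).\<close>
definition higson_character :: "(('a::metric_space \<Rightarrow> complex) \<Rightarrow> complex) \<Rightarrow> bool" where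
  "higson_character \<phi> \<longleftrightarrow>
     (\<forall>f g. higson f \<longrightarrow> higson g \<longrightarrow> \<phi> (\<lambda>x. f x + g x) = \<phi> f + \<phi> g) \<and>
     (\<forall>f g. higson f \<longrightarrow> higson g \<longrightarrow> \<phi> (\<lambda>x. f x * g x) = \<phi> f * \<phi> g) \<and>
     (\<forall>c f. higson f \<longrightarrow> \<phi> (\<lambda>x. c * f x) = c * \<phi> f) \<and>
     \<phi> (\<lambda>x. 1) = 1 \<and>
     (\<forall>f. \<not> higson f \<longrightarrow> \<phi> f = 0)"

definition higson_eval :: "'a::metric_space \<Rightarrow> (('a \<Rightarrow> complex) \<Rightarrow> complex)" where
  "higson_eval x = (\<lambda>f. if higson f then f x else 0)"

definition higson_compactification :: "'a::metric_space itself \<Rightarrow> (('a \<Rightarrow> complex) \<Rightarrow> complex) set" where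
  "higson_compactification _ = {\<phi>. higson_character \<phi>}"

definition higson_corona :: "'a::metric_space itself \<Rightarrow> (('a \<Rightarrow> complex) \<Rightarrow> complex) set" where
  "higson_corona T = higson_compactification T - range higson_eval"

end

theory Submission
  imports Defs
begin

(* Pick points x_n with d(x_n, x_m) >= 2(n + 1) + 2(m + 1), which is possible because X is
   infinite with finite balls, hence unbounded.  Bumps of radius n + 1 around the x_n have disjoint
   supports and slopes 1/(n + 1) tending to 0, so for every A of naturals their sum is a Higson
   function equal to the indicator of A on the sequence.  An ultrafilter G on the naturals containing
   the cofinite sets gives the point f |-> lim_G f(x_n) of the corona, and these indicator extensions
   tell apart the points of different ultrafilters.  Finally, an independent family (I_S), indexed by
   the sets S of naturals, yields one such ultrafilter for each family U of sets of naturals: one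
   containing I_S for S in U and the complement of I_S for S not in U. *)

section \<open>Higson functions\<close>

lemma higsonI:
  assumes "\<And>x. cmod (f x) \<le> B"
    and "\<And>e R. e > 0 \<Longrightarrow> R > 0 \<Longrightarrow> \<exists>F. finite F \<and>
           (\<forall>x y. x \<notin> F \<and> y \<notin> F \<and> dist x y < R \<longrightarrow> cmod (f x - f y) < e)"
  shows "higson f"
  unfolding higson_def using assms by blast

lemma higson_boundedE:
  assumes "higson f"
  obtains B where "B > 0" "\<And>x. cmod (f x) \<le> B"
proof -
  obtain B where B: "\<forall>x. cmod (f x) \<le> B" using assms unfolding higson_def by blast
  show thesis
  proof (rule that[of "max B 1"])
    show "cmod (f x) \<le> max B 1" for x using B by (meson max.coboundedI1)
  qed simp
qed

lemma higson_oscillationE: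
  assumes "higson f" "e > 0" "R > 0"
  obtains F where "finite F"
    "\<And>x y. x \<notin> F \<Longrightarrow> y \<notin> F \<Longrightarrow> dist x y < R \<Longrightarrow> cmod (f x - f y) < e"
proof -
  obtain F where "finite F" "\<forall>x y. x \<notin> F \<and> y \<notin> F \<and> dist x y < R \<longrightarrow> cmod (f x - f y) < e"
    using assms unfolding higson_def by blast
  then show thesis using that by blast
qed

lemma higson_const: "higson (\<lambda>x::'a::metric_space. c)"
  by (rule higsonI[of _ "cmod c"]) auto

lemma higson_add:
  assumes f: "higson f" and g: "higson g"
  shows "higson (\<lambda>x. f x + g x)"
proof -
  obtain B1 B2 where "\<And>x. cmod (f x) \<le> B1" "\<And>x. cmod (g x) \<le> B2"
    using higson_boundedE[OF f] higson_boundedE[OF g] by metis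
  then have bounded: "cmod (f x + g x) \<le> B1 + B2" for x
    by (meson add_mono norm_triangle_le)
  have "\<exists>F. finite F \<and> (\<forall>x y. x \<notin> F \<and> y \<notin> F \<and> dist x y < R \<longrightarrow>
      cmod (f x + g x - (f y + g y)) < e)" if "e > 0" "R > 0" for e R
  proof -
    obtain F1 where F1: "finite F1"
      "\<And>x y. x \<notin> F1 \<Longrightarrow> y \<notin> F1 \<Longrightarrow> dist x y < R \<Longrightarrow> cmod (f x - f y) < e/2"
      using higson_oscillationE[OF f half_gt_zero[OF \<open>e > 0\<close>] \<open>R > 0\<close>] by blast
    obtain F2 where F2: "finite F2"
      "\<And>x y. x \<notin> F2 \<Longrightarrow> y \<notin> F2 \<Longrightarrow> dist x y < R \<Longrightarrow> cmod (g x - g y) < e/2"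
      using higson_oscillationE[OF g half_gt_zero[OF \<open>e > 0\<close>] \<open>R > 0\<close>] by blast
    have "\<forall>x y. x \<notin> F1 \<union> F2 \<and> y \<notin> F1 \<union> F2 \<and> dist x y < R \<longrightarrow> cmod (f x + g x - (f y + g y)) < e"
    proof (intro allI impI)
      fix x y assume xy: "x \<notin> F1 \<union> F2 \<and> y \<notin> F1 \<union> F2 \<and> dist x y < R"
      have "cmod (f x + g x - (f y + g y)) \<le> cmod (f x - f y) + cmod (g x - g y)"
        by (metis add_diff_add norm_triangle_ineq)
      also have "\<dots> < e/2 + e/2"
        using F1 F2 xy by (intro add_strict_mono) auto
      finally show "cmod (f x + g x - (f y + g y)) < e" by simp
    qed
    with F1(1) F2(1) show ?thesis by (intro exI[of _ "F1 \<union> F2"]) simp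
  qed
  with bounded show ?thesis by (rule higsonI)
qed

lemma higson_mult:
  assumes f: "higson f" and g: "higson g"
  shows "higson (\<lambda>x. f x * g x)"
proof -
  obtain B1 where B1: "B1 > 0" "\<And>x. cmod (f x) \<le> B1"
    using higson_boundedE[OF f] by blast
  obtain B2 where B2: "B2 > 0" "\<And>x. cmod (g x) \<le> B2"
    using higson_boundedE[OF g] by blast
  have bounded: "cmod (f x * g x) \<le> B1 * B2" for x
    using B1 B2 by (simp add: norm_mult mult_mono')
  have "\<exists>F. finite F \<and> (\<forall>x y. x \<notin> F \<and> y \<notin> F \<and> dist x y < R \<longrightarrow>
      cmod (f x * g x - f y * g y) < e)" if "e > 0" "R > 0" for e R
  proof -
    have "e/(2*B2) > 0" "e/(2*B1) > 0" using B1 B2 that by simp_all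
    obtain F1 where F1: "finite F1"
      "\<And>x y. x \<notin> F1 \<Longrightarrow> y \<notin> F1 \<Longrightarrow> dist x y < R \<Longrightarrow> cmod (f x - f y) < e/(2*B2)"
      using higson_oscillationE[OF f \<open>e/(2*B2) > 0\<close> \<open>R > 0\<close>] by blast
    obtain F2 where F2: "finite F2"
      "\<And>x y. x \<notin> F2 \<Longrightarrow> y \<notin> F2 \<Longrightarrow> dist x y < R \<Longrightarrow> cmod (g x - g y) < e/(2*B1)"
      using higson_oscillationE[OF g \<open>e/(2*B1) > 0\<close> \<open>R > 0\<close>] by blast
    have "\<forall>x y. x \<notin> F1 \<union> F2 \<and> y \<notin> F1 \<union> F2 \<and> dist x y < R \<longrightarrow> cmod (f x * g x - f y * g y) < e"
    proof (intro allI impI)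
      fix x y assume xy: "x \<notin> F1 \<union> F2 \<and> y \<notin> F1 \<union> F2 \<and> dist x y < R"
      have "f x * g x - f y * g y = f x * (g x - g y) + g y * (f x - f y)"
        by (simp add: algebra_simps)
      then have "cmod (f x * g x - f y * g y) \<le> cmod (f x) * cmod (g x - g y) + cmod (g y) * cmod (f x - f y)"
        by (metis norm_mult norm_triangle_ineq)
      also have "\<dots> \<le> B1 * cmod (g x - g y) + B2 * cmod (f x - f y)"
        using B1 B2 by (intro add_mono mult_right_mono) auto
      also have "\<dots> < B1 * (e/(2*B1)) + B2 * (e/(2*B2))"
        using B1 B2 F1 F2 xy by (intro add_strict_mono mult_strict_left_mono) auto
      finally show "cmod (f x * g x - f y * g y) < e" using B1 B2 by simp
    qed
    with F1(1) F2(1) show ?thesis by (intro exI[of _ "F1 \<union> F2"]) simp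
  qed
  with bounded show ?thesis by (rule higsonI)
qed

lemma higson_point_indicator: "higson (\<lambda>x::'a::metric_space. if x = a then 1 else 0)"
  by (rule higsonI[of _ 1]) (auto intro!: exI[of _ "{a}"])

section \<open>Ultrafilters and limits along them\<close>

definition ultrafilter :: "'a filter \<Rightarrow> bool" where
  "ultrafilter F \<longleftrightarrow> F \<noteq> bot \<and> (\<forall>P. eventually P F \<or> eventually (\<lambda>x. \<not> P x) F)"

lemma Inf_chain_neq_bot:
  fixes C :: "'a filter set"
  assumes "C \<noteq> {}" "bot \<notin> C" "\<And>G H. G \<in> C \<Longrightarrow> H \<in> C \<Longrightarrow> G \<le> H \<or> H \<le> G"
  shows "Inf C \<noteq> bot"
proof
  have directed: "\<exists>K\<in>C. K \<le> inf G H" if "G \<in> C" "H \<in> C" for G H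
    using assms(3)[OF that] that by (metis inf_absorb1 inf_absorb2 order_refl)
  assume "Inf C = bot"
  then have "eventually (\<lambda>_. False) (Inf C)" by simp
  then obtain G where "G \<in> C" "eventually (\<lambda>_. False) G"
    by (auto simp: eventually_Inf_base[OF assms(1) directed])
  then show False using assms(2) by (simp add: eventually_False)
qed

lemma maximal_proper_filter_ultrafilter:
  assumes "G \<noteq> bot" and maximal: "\<And>H. H \<le> G \<Longrightarrow> H \<noteq> bot \<Longrightarrow> H = G"
  shows "ultrafilter G"
proof -
  have "eventually P G \<or> eventually (\<lambda>x. \<not> P x) G" for P
  proof (rule ccontr)
    assume none: "\<not> ?thesis"
    let ?H = "inf G (principal {x. P x})"
    have "?H \<noteq> bot"
      using none by (simp add: trivial_limit_def eventually_inf_principal)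
    then have "?H = G"
      by (intro maximal) simp_all
    moreover have "eventually P ?H"
      by (simp add: eventually_inf_principal)
    ultimately show False
      using none by simp
  qed
  with assms(1) show ?thesis unfolding ultrafilter_def by blast
qed

lemma ultrafilter_refines:
  fixes F :: "'a filter"
  assumes "F \<noteq> bot"
  shows "\<exists>G\<le>F. ultrafilter G"
proof -
  define A where "A = {G. G \<le> F \<and> G \<noteq> bot}"
  have "partial_order_on A (relation_of (\<ge>) A)"
    by (rule partial_order_on_relation_ofI) auto
  moreover have "\<exists>u\<in>A. \<forall>G\<in>C. u \<le> G" if "C \<in> Chains (relation_of (\<ge>) A)" for C
  proof (cases "C = {}")
    case True
    then show ?thesis using assms unfolding A_def by blast
  next
    case False
    have C: "C \<subseteq> A" "\<And>G H. G \<in> C \<Longrightarrow> H \<in> C \<Longrightarrow> G \<le> H \<or> H \<le> G"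
      using that unfolding Chains_def relation_of_def by auto
    then have "Inf C \<noteq> bot"
      using False by (intro Inf_chain_neq_bot) (auto simp: A_def)
    moreover obtain G0 where "G0 \<in> C" using False by blast
    then have "Inf C \<le> F"
      using C(1) Inf_lower[of G0 C] unfolding A_def by auto
    ultimately show ?thesis
      unfolding A_def by (blast intro: Inf_lower)
  qed
  ultimately have "\<exists>G\<in>A. \<forall>H\<in>A. H \<le> G \<longrightarrow> H = G"
    by (rule predicate_Zorn)
  then obtain G where "G \<le> F" "G \<noteq> bot" "\<And>H. H \<le> G \<Longrightarrow> H \<noteq> bot \<Longrightarrow> H = G"
    unfolding A_def by (auto intro: order_trans)
  then show ?thesis using maximal_proper_filter_ultrafilter by blast
qed

lemma ultrafilter_tendsto_compact:
  assumes F: "ultrafilter F" and S: "compact S" and f: "eventually (\<lambda>x. f x \<in> S) F"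
  shows "\<exists>L. (f \<longlongrightarrow> L) F"
proof -
  have "filtermap f F \<noteq> bot" "eventually (\<lambda>y. y \<in> S) (filtermap f F)"
    using F f by (auto simp: ultrafilter_def filtermap_bot_iff eventually_filtermap)
  then obtain L where L: "inf (nhds L) (filtermap f F) \<noteq> bot"
    using S unfolding compact_filter by blast
  have "eventually (\<lambda>x. f x \<in> U) F" if "open U" "L \<in> U" for U
  proof (rule ccontr)
    assume "\<not> eventually (\<lambda>x. f x \<in> U) F"
    then have "eventually (\<lambda>y. y \<notin> U) (filtermap f F)"
      using F by (auto simp: ultrafilter_def eventually_filtermap)
    moreover have "eventually (\<lambda>y. y \<in> U) (nhds L)"
      using that eventually_nhds by blast
    ultimately have "eventually (\<lambda>_. False) (inf (nhds L) (filtermap f F))"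
      unfolding eventually_inf by blast
    then show False using L by (simp add: trivial_limit_def)
  qed
  then show ?thesis unfolding tendsto_def by blast
qed

definition ultralimit_character :: "('i \<Rightarrow> 'a::metric_space) \<Rightarrow> 'i filter \<Rightarrow> ('a \<Rightarrow> complex) \<Rightarrow> complex" where
  "ultralimit_character xs F f = (if higson f then Lim F (\<lambda>i. f (xs i)) else 0)"

lemma higson_ultralimit_exists:
  assumes "ultrafilter F" "higson f"
  shows "\<exists>L. ((\<lambda>i. f (xs i)) \<longlongrightarrow> L) F"
proof -
  obtain B where "\<forall>x. cmod (f x) \<le> B" using assms(2) unfolding higson_def by blast
  then have "eventually (\<lambda>i. f (xs i) \<in> cball 0 B) F" by simp
  then show ?thesis by (rule ultrafilter_tendsto_compact[OF assms(1) compact_cball])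
qed

lemma ultralimit_character_eqI:
  assumes "ultrafilter F" "higson f" "((\<lambda>i. f (xs i)) \<longlongrightarrow> L) F"
  shows "ultralimit_character xs F f = L"
  using assms tendsto_Lim unfolding ultralimit_character_def ultrafilter_def by auto

lemma higson_character_ultralimit:
  fixes xs :: "'i \<Rightarrow> 'a::metric_space"
  assumes F: "ultrafilter F"
  shows "higson_character (ultralimit_character xs F)"
  unfolding higson_character_def
proof (intro conjI allI impI)
  fix f g :: "'a \<Rightarrow> complex" assume f: "higson f" and g: "higson g"
  obtain a b where a: "((\<lambda>i. f (xs i)) \<longlongrightarrow> a) F" and b: "((\<lambda>i. g (xs i)) \<longlongrightarrow> b) F"
    using higson_ultralimit_exists[OF F] f g by metis
  have fa: "ultralimit_character xs F f = a" and gb: "ultralimit_character xs F g = b"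
    using ultralimit_character_eqI[OF F] f g a b by auto
  show "ultralimit_character xs F (\<lambda>x. f x + g x) = ultralimit_character xs F f + ultralimit_character xs F g"
    using ultralimit_character_eqI[OF F higson_add[OF f g] tendsto_add[OF a b]] fa gb by simp
  show "ultralimit_character xs F (\<lambda>x. f x * g x) = ultralimit_character xs F f * ultralimit_character xs F g"
    using ultralimit_character_eqI[OF F higson_mult[OF f g] tendsto_mult[OF a b]] fa gb by simp
next
  fix c :: complex and f :: "'a \<Rightarrow> complex" assume f: "higson f"
  then obtain a where a: "((\<lambda>i. f (xs i)) \<longlongrightarrow> a) F"
    using higson_ultralimit_exists[OF F] by blast
  show "ultralimit_character xs F (\<lambda>x. c * f x) = c * ultralimit_character xs F f"
    using ultralimit_character_eqI[OF F higson_mult[OF higson_const f] tendsto_mult[OF tendsto_const a]]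
      ultralimit_character_eqI[OF F f a] by simp
next
  show "ultralimit_character xs F (\<lambda>x. 1) = 1"
    by (rule ultralimit_character_eqI[OF F higson_const]) simp
qed (simp add: ultralimit_character_def)

lemma ultralimit_character_in_corona:
  assumes F: "ultrafilter F" and avoids: "\<And>x. eventually (\<lambda>i. xs i \<noteq> x) F"
  shows "ultralimit_character xs F \<in> higson_corona TYPE('a::metric_space)"
proof -
  have "ultralimit_character xs F \<noteq> higson_eval x" for x :: 'a
  proof -
    let ?\<delta> = "\<lambda>y::'a. if y = x then 1 else 0 :: complex"
    have "eventually (\<lambda>i. ?\<delta> (xs i) = 0) F"
      using avoids[of x] by (rule eventually_mono) simp
    then have "ultralimit_character xs F ?\<delta> = 0"
      using ultralimit_character_eqI[OF F higson_point_indicator tendsto_eventually] by blast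
    moreover have "higson_eval x ?\<delta> = 1"
      using higson_point_indicator unfolding higson_eval_def by simp
    ultimately show ?thesis by auto
  qed
  then show ?thesis
    using higson_character_ultralimit[OF F]
    unfolding higson_corona_def higson_compactification_def by auto
qed

section \<open>Independent families\<close>

(* The sign pattern on the finite subfamily X is encoded by U: a point realises it when it lies
   in I i exactly for the i in X that belong to U. *)
definition independent_family :: "('i \<Rightarrow> 'a set) \<Rightarrow> bool" where
  "independent_family I \<longleftrightarrow> (\<forall>X U. finite X \<longrightarrow> infinite {x. \<forall>i\<in>X. x \<in> I i \<longleftrightarrow> i \<in> U})"

lemma independent_family_filter_proper:
  assumes "independent_family I"
  shows "inf cofinite (INF i. principal {x. x \<in> I i \<longleftrightarrow> i \<in> U}) \<noteq> bot"
proof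
  assume "inf cofinite (INF i. principal {x. x \<in> I i \<longleftrightarrow> i \<in> U}) = bot"
  then have "eventually (\<lambda>_. False) (inf cofinite (INF i. principal {x. x \<in> I i \<longleftrightarrow> i \<in> U}))"
    by simp
  then obtain P Q where P: "eventually P cofinite" and Q: "eventually Q (INF i. principal {x. x \<in> I i \<longleftrightarrow> i \<in> U})"
    and PQ: "\<And>x. P x \<Longrightarrow> Q x \<Longrightarrow> False"
    unfolding eventually_inf by blast
  obtain X where X: "finite X" "eventually Q (INF i\<in>X. principal {x. x \<in> I i \<longleftrightarrow> i \<in> U})"
    using eventually_INF[THEN iffD1, OF Q] by blast
  then have "\<forall>x. (\<forall>i\<in>X. x \<in> I i \<longleftrightarrow> i \<in> U) \<longrightarrow> Q x"
    by (simp add: INF_principal_finite eventually_principal)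
  then have "{x. \<forall>i\<in>X. x \<in> I i \<longleftrightarrow> i \<in> U} \<subseteq> {x. \<not> P x}"
    using PQ by blast
  moreover have "finite {x. \<not> P x}"
    using P by (simp add: eventually_cofinite)
  ultimately have "finite {x. \<forall>i\<in>X. x \<in> I i \<longleftrightarrow> i \<in> U}"
    by (rule finite_subset)
  with assms X(1) show False
    unfolding independent_family_def by blast
qed

lemma independent_family_ultrafilter:
  assumes "independent_family I"
  obtains G where "ultrafilter G" "G \<le> cofinite" "\<And>i. eventually (\<lambda>x. x \<in> I i \<longleftrightarrow> i \<in> U) G"
proof -
  let ?F = "inf cofinite (INF i. principal {x. x \<in> I i \<longleftrightarrow> i \<in> U})"
  obtain G where G: "G \<le> ?F" "ultrafilter G"
    using ultrafilter_refines[OF independent_family_filter_proper[OF assms]] by blast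
  have G_principal: "G \<le> principal {x. x \<in> I i \<longleftrightarrow> i \<in> U}" for i
    using G(1) by (meson INF_lower UNIV_I le_infE order_trans)
  have "eventually (\<lambda>x. x \<in> I i \<longleftrightarrow> i \<in> U) G" for i
    by (rule filter_leD[OF G_principal[of i]]) (simp add: eventually_principal)
  moreover have "G \<le> cofinite" using G(1) by (meson le_infE order_trans)
  ultimately show thesis using that G(2) by blast
qed

lemma eventually_inj_on_initial_segments:
  assumes "finite \<S>"
  shows "eventually (\<lambda>n. inj_on (\<lambda>S::nat set. S \<inter> {..<n}) \<S>) sequentially"
proof -
  have pair: "eventually (\<lambda>n. S \<inter> {..<n} = T \<inter> {..<n} \<longrightarrow> S = T) sequentially" for S T :: "nat set"
  proof (cases "S = T")
    case False
    then obtain j where j: "j \<in> S \<longleftrightarrow> j \<notin> T" by blast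
    have "eventually (\<lambda>n. j < n) sequentially" by (rule eventually_gt_at_top)
    then show ?thesis by (rule eventually_mono) (use j in blast)
  qed simp
  have "eventually (\<lambda>n. \<forall>S\<in>\<S>. \<forall>T\<in>\<S>. S \<inter> {..<n} = T \<inter> {..<n} \<longrightarrow> S = T) sequentially"
    by (intro eventually_ball_finite ballI assms pair)
  then show ?thesis by (rule eventually_mono) (simp add: inj_on_def)
qed

(* Hausdorff's construction: the naturals enumerate the pairs (n, A) with A a family of subsets of
   {..<n}, and I S consists of the codes of those pairs whose family A contains the trace of S
   below n.  The code of (n, traces of X \<inter> U) realises the pattern U on X once n separates the
   traces of the members of X, and these codes are distinct for distinct n. *)
lemma independent_family_nat: "\<exists>I :: nat set \<Rightarrow> nat set. independent_family I"
proof -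
  define T :: "(nat \<times> nat set set) set" where "T = (\<Union>n. {n} \<times> Pow (Pow {..<n}))"
  have "countable T" unfolding T_def by (simp add: countable_finite)
  moreover have "infinite T"
  proof -
    have "inj (\<lambda>n::nat. (n, {} :: nat set set))" by (rule injI) simp
    then have "infinite (range (\<lambda>n::nat. (n, {} :: nat set set)))"
      using finite_imageD infinite_UNIV_nat by blast
    moreover have "range (\<lambda>n. (n, {})) \<subseteq> T" unfolding T_def by auto
    ultimately show ?thesis using finite_subset by blast
  qed
  ultimately obtain enum where enum: "bij_betw enum (UNIV :: nat set) T"
    using bij_betw_from_nat_into by blast
  define I where "I S = {k. S \<inter> {..<fst (enum k)} \<in> snd (enum k)}" for S
  have "infinite {k. \<forall>S\<in>X. k \<in> I S \<longleftrightarrow> S \<in> U}" if X: "finite X" for X U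
  proof -
    define code where "code n = inv_into UNIV enum (n, (\<lambda>S. S \<inter> {..<n}) ` (X \<inter> U))" for n
    have enum_code: "enum (code n) = (n, (\<lambda>S. S \<inter> {..<n}) ` (X \<inter> U))" for n
      unfolding code_def using enum by (intro f_inv_into_f) (auto simp: bij_betw_def T_def)
    then have "inj code" by (intro injI) (metis fst_conv)
    obtain n0 where n0: "\<And>n. n \<ge> n0 \<Longrightarrow> inj_on (\<lambda>S. S \<inter> {..<n}) X"
      using eventually_inj_on_initial_segments[OF X] unfolding eventually_sequentially by blast
    have "code n \<in> {k. \<forall>S\<in>X. k \<in> I S \<longleftrightarrow> S \<in> U}" if "n \<ge> n0" for n
      by (simp add: I_def enum_code inj_on_image_mem_iff[OF n0[OF that]])
    then have "code ` {n0..} \<subseteq> {k. \<forall>S\<in>X. k \<in> I S \<longleftrightarrow> S \<in> U}" by auto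
    moreover have "infinite (code ` {n0..})"
      using \<open>inj code\<close> by (simp add: finite_image_iff inj_on_subset infinite_Ici)
    ultimately show ?thesis using finite_subset by blast
  qed
  then show ?thesis unfolding independent_family_def by (intro exI[of _ I]) blast
qed

section \<open>Sparse sequences\<close>

lemma ulf_finite_ball: "ulf TYPE('a::metric_space) \<Longrightarrow> finite (ball (x::'a) r)"
  unfolding ulf_def by (metis ball_eq_empty finite.emptyI not_less)

lemma ulf_infinite_unbounded:
  assumes "infinite (UNIV :: 'a::metric_space set)" "ulf TYPE('a)"
  shows "\<not> bounded (UNIV :: 'a set)"
proof
  fix x :: 'a
  assume "bounded (UNIV :: 'a set)"
  then obtain r where "UNIV \<subseteq> ball x r" using bounded_subset_ballD by blast
  then show False using assms ulf_finite_ball finite_subset by blast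
qed

lemma unbounded_sparse_sequence:
  fixes g :: "nat \<Rightarrow> real"
  assumes "\<not> bounded (UNIV :: 'a::metric_space set)" "mono g" "\<And>n. 0 \<le> g n"
  shows "\<exists>xs :: nat \<Rightarrow> 'a. \<forall>m n. m \<noteq> n \<longrightarrow> g m + g n \<le> dist (xs m) (xs n)"
proof -
  fix p :: 'a
  have "\<forall>R. \<exists>y. R \<le> dist p y"
    using assms(1) unfolding bounded_any_center[of _ p] by (meson UNIV_I linear)
  then obtain far where far: "\<And>R. R \<le> dist p (far R)" by metis
  define xs where "xs = rec_nat p (\<lambda>n x. far (dist p x + 2 * g (Suc n)))"
  have step: "dist p (xs n) + 2 * g (Suc n) \<le> dist p (xs (Suc n))" for n
    unfolding xs_def using far by simp
  have "dist p (xs n) \<le> dist p (xs (Suc n))" for n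
    using step[of n] assms(3)[of "Suc n"] by linarith
  then have "incseq (\<lambda>n. dist p (xs n))"
    by (rule incseq_SucI)
  have sep: "g m + g n \<le> dist (xs m) (xs n)" if "m < n" for m n
  proof -
    obtain k where k: "n = Suc k" "m \<le> k"
      using \<open>m < n\<close> by (cases n) auto
    have "g m + g n \<le> 2 * g n"
      using monoD[OF \<open>mono g\<close>, of m n] \<open>m < n\<close> by simp
    also have "\<dots> \<le> dist p (xs n) - dist p (xs k)" using step[of k] k by simp
    also have "\<dots> \<le> dist p (xs n) - dist p (xs m)"
      using \<open>incseq (\<lambda>n. dist p (xs n))\<close> k by (simp add: incseq_def)
    also have "\<dots> \<le> dist (xs m) (xs n)" using dist_triangle[of p "xs n" "xs m"] by simp
    finally show ?thesis .
  qed
  show ?thesis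
  proof (intro exI[of _ xs] allI impI)
    fix m n :: nat
    assume "m \<noteq> n"
    then consider "m < n" | "n < m" by linarith
    then show "g m + g n \<le> dist (xs m) (xs n)"
      by cases (use sep[of m n] sep[of n m] in \<open>simp_all add: dist_commute add.commute\<close>)
  qed
qed

definition bump :: "(nat \<Rightarrow> 'a::metric_space) \<Rightarrow> nat \<Rightarrow> 'a \<Rightarrow> real" where
  "bump xs n x = max 0 (1 - dist x (xs n) / (real n + 1))"

(* For a sparse sequence the balls of radius n + 1 around the points are disjoint, so at most
   one summand is present. *)
definition sparse_indicator :: "(nat \<Rightarrow> 'a::metric_space) \<Rightarrow> nat set \<Rightarrow> 'a \<Rightarrow> complex" where
  "sparse_indicator xs A x = complex_of_real (\<Sum>n\<in>{n\<in>A. dist x (xs n) < real n + 1}. bump xs n x)"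

lemma bump_eq_0: "real n + 1 \<le> dist x (xs n) \<Longrightarrow> bump xs n x = 0"
  unfolding bump_def by simp

lemma bump_at_centre: "bump xs n (xs n) = 1"
  unfolding bump_def by simp

lemma bump_bounds: "0 \<le> bump xs n x" "bump xs n x \<le> 1"
  unfolding bump_def by auto

lemma bump_lipschitz: "\<bar>bump xs n x - bump xs n y\<bar> \<le> dist x y / (real n + 1)"
proof -
  have "\<bar>dist x (xs n) - dist y (xs n)\<bar> \<le> dist x y"
    using abs_dist_diff_le[of x "xs n" y] by (simp add: dist_commute)
  then have "\<bar>dist x (xs n) - dist y (xs n)\<bar> / (real n + 1) \<le> dist x y / (real n + 1)"
    by (rule divide_right_mono) simp
  moreover have "\<bar>dist x (xs n) - dist y (xs n)\<bar> / (real n + 1) =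
      \<bar>dist x (xs n) / (real n + 1) - dist y (xs n) / (real n + 1)\<bar>"
    by (simp add: abs_divide flip: diff_divide_distrib)
  moreover have "\<bar>max 0 (1 - a) - max 0 (1 - b)\<bar> \<le> \<bar>a - b\<bar>" for a b :: real
    by (simp add: max_def abs_if)
  ultimately show ?thesis unfolding bump_def by (metis order_trans)
qed

lemma sparse_indicator_eq_bump:
  assumes "n \<in> A" "\<And>m. m \<in> A \<Longrightarrow> dist x (xs m) < real m + 1 \<Longrightarrow> m = n"
  shows "sparse_indicator xs A x = bump xs n x"
proof (cases "dist x (xs n) < real n + 1")
  case True
  then have near: "{m\<in>A. dist x (xs m) < real m + 1} = {n}" using assms by blast
  show ?thesis unfolding sparse_indicator_def near by simp
next
  case False
  then have none: "{m\<in>A. dist x (xs m) < real m + 1} = {}" using assms by blast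
  have "bump xs n x = 0" using False by (simp add: bump_eq_0)
  then show ?thesis unfolding sparse_indicator_def none by simp
qed

lemma sparse_indicator_eq_0:
  assumes "\<And>m. m \<in> A \<Longrightarrow> real m + 1 \<le> dist x (xs m)"
  shows "sparse_indicator xs A x = 0"
proof -
  have none: "{n\<in>A. dist x (xs n) < real n + 1} = {}" using assms by (auto simp: not_less)
  show ?thesis unfolding sparse_indicator_def none by simp
qed

locale sparse_sequence =
  fixes xs :: "nat \<Rightarrow> 'a::metric_space"
  assumes separated: "m \<noteq> n \<Longrightarrow> 2 * (real m + 1) + 2 * (real n + 1) \<le> dist (xs m) (xs n)"
begin

lemma inj: "inj xs"
proof (rule injI)
  fix m n
  assume "xs m = xs n"
  then show "m = n" using separated[of m n] by (cases "m = n") simp_all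
qed

lemma balls_far_apart:
  assumes "m \<noteq> n" "dist x (xs m) < real m + 1" "dist y (xs n) < real n + 1"
  shows "real m + real n + 2 < dist x y"
proof -
  have "dist (xs m) (xs n) \<le> dist (xs m) x + dist x (xs n)" "dist x (xs n) \<le> dist x y + dist y (xs n)"
    by (rule dist_triangle)+
  then show ?thesis
    using separated[OF assms(1)] assms(2,3) dist_commute[of x "xs m"] by argo
qed

lemma sparse_indicator_near:
  assumes "n \<in> A" "dist x (xs n) < real n + 1"
  shows "sparse_indicator xs A x = bump xs n x"
proof (rule sparse_indicator_eq_bump[OF \<open>n \<in> A\<close>])
  show "m = n" if "dist x (xs m) < real m + 1" for m
  proof (rule ccontr)
    assume "m \<noteq> n"
    then have "real m + real n + 2 < dist x x"
      by (rule balls_far_apart[OF _ that assms(2)])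
    then show False by simp
  qed
qed

lemma sparse_indicator_at: "sparse_indicator xs A (xs k) = (if k \<in> A then 1 else 0)"
proof (cases "k \<in> A")
  case True
  then show ?thesis using sparse_indicator_near[OF True] bump_at_centre by simp
next
  case False
  have "real m + 1 \<le> dist (xs k) (xs m)" if "m \<in> A" for m
  proof -
    have "k \<noteq> m" using that False by blast
    then have "2 * (real k + 1) + 2 * (real m + 1) \<le> dist (xs k) (xs m)"
      by (rule separated)
    moreover have "0 \<le> real k" "0 \<le> real m" by simp_all
    ultimately show ?thesis by argo
  qed
  then have "sparse_indicator xs A (xs k) = 0" by (rule sparse_indicator_eq_0)
  then show ?thesis using False by simp
qed

lemma sparse_indicator_bounded: "cmod (sparse_indicator xs A x) \<le> 1"
proof (cases "\<exists>n\<in>A. dist x (xs n) < real n + 1")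
  case True
  then obtain n where "n \<in> A" "dist x (xs n) < real n + 1" by blast
  then have "sparse_indicator xs A x = bump xs n x" by (rule sparse_indicator_near)
  then show ?thesis using bump_bounds[of xs n x] by simp
next
  case False
  then have "sparse_indicator xs A x = 0" by (intro sparse_indicator_eq_0) (auto simp: not_less)
  then show ?thesis by simp
qed

lemma sparse_indicator_oscillation:
  assumes "n \<in> A" "dist x (xs n) < real n + 1" "dist x y < R" "R \<le> real n"
  shows "cmod (sparse_indicator xs A x - sparse_indicator xs A y) \<le> R / (real n + 1)"
proof -
  have "sparse_indicator xs A y = bump xs n y"
  proof (rule sparse_indicator_eq_bump[OF assms(1)])
    fix m assume m: "m \<in> A" "dist y (xs m) < real m + 1"
    show "m = n"
    proof (rule ccontr)
      assume "m \<noteq> n"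
      then have "real n + real m + 2 < dist x y"
        using balls_far_apart[OF _ assms(2) m(2)] by simp
      then show False using assms(3,4) by linarith
    qed
  qed
  then have "cmod (sparse_indicator xs A x - sparse_indicator xs A y) = \<bar>bump xs n x - bump xs n y\<bar>"
    using sparse_indicator_near[OF assms(1,2)] by (simp flip: of_real_diff)
  also have "\<dots> \<le> dist x y / (real n + 1)" by (rule bump_lipschitz)
  also have "\<dots> \<le> R / (real n + 1)"
    using assms(3) by (simp add: divide_right_mono)
  finally show ?thesis .
qed

lemma higson_sparse_indicator:
  assumes "ulf TYPE('a)"
  shows "higson (sparse_indicator xs A)"
proof (rule higsonI[OF sparse_indicator_bounded])
  fix e R :: real
  assume "e > 0" "R > 0"
  obtain N :: nat where N: "max R (R / e) < real N" using reals_Archimedean2 by blast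
  have small: "R / (real n + 1) < e" if "N \<le> n" for n
  proof -
    have "R / e < real n + 1" using N that by linarith
    then show ?thesis using \<open>e > 0\<close> by (simp add: pos_divide_less_eq mult.commute)
  qed
  define F where "F = (\<Union>n<N. ball (xs n) (real n + 1))"
  have far: "N \<le> n" if "x \<notin> F" "dist x (xs n) < real n + 1" for x n
    using that unfolding F_def by (force simp: dist_commute)
  have "cmod (sparse_indicator xs A x - sparse_indicator xs A y) < e"
    if "x \<notin> F" "y \<notin> F" "dist x y < R" for x y
  proof (cases "\<exists>n\<in>A. dist x (xs n) < real n + 1 \<or> dist y (xs n) < real n + 1")
    case True
    then obtain n where n: "n \<in> A" "dist x (xs n) < real n + 1 \<or> dist y (xs n) < real n + 1"
      by blast
    then have "N \<le> n" "R \<le> real n" using far that N by fastforce+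
    from n(2) show ?thesis
    proof
      assume "dist x (xs n) < real n + 1"
      from sparse_indicator_oscillation[OF n(1) this that(3) \<open>R \<le> real n\<close>] small[OF \<open>N \<le> n\<close>]
      show ?thesis by linarith
    next
      assume "dist y (xs n) < real n + 1"
      moreover have "dist y x < R" using that(3) by (simp add: dist_commute)
      ultimately have "cmod (sparse_indicator xs A y - sparse_indicator xs A x) \<le> R / (real n + 1)"
        using sparse_indicator_oscillation[OF n(1)] \<open>R \<le> real n\<close> by blast
      with small[OF \<open>N \<le> n\<close>] show ?thesis by (simp add: norm_minus_commute)
    qed
  next
    case False
    then have "sparse_indicator xs A x = 0" "sparse_indicator xs A y = 0"
      by (auto intro!: sparse_indicator_eq_0 simp: not_less)
    then show ?thesis using \<open>e > 0\<close> by simp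
  qed
  moreover have "finite F" unfolding F_def using ulf_finite_ball[OF assms] by auto
  ultimately show "\<exists>F. finite F \<and>
      (\<forall>x y. x \<notin> F \<and> y \<notin> F \<and> dist x y < R \<longrightarrow> cmod (sparse_indicator xs A x - sparse_indicator xs A y) < e)"
    by blast
qed

lemma ultralimit_sparse_indicator:
  assumes "ulf TYPE('a)" "ultrafilter F" "eventually (\<lambda>n. n \<in> A \<longleftrightarrow> b) F"
  shows "ultralimit_character xs F (sparse_indicator xs A) = (if b then 1 else 0)"
proof -
  have "eventually (\<lambda>n. sparse_indicator xs A (xs n) = (if b then 1 else 0)) F"
    using assms(3) by (rule eventually_mono) (simp add: sparse_indicator_at)
  then show ?thesis
    by (intro ultralimit_character_eqI[OF assms(2) higson_sparse_indicator[OF assms(1)]] tendsto_eventually)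
qed

lemma ultralimit_character_free_in_corona:
  assumes "ultrafilter F" "F \<le> cofinite"
  shows "ultralimit_character xs F \<in> higson_corona TYPE('a)"
proof (rule ultralimit_character_in_corona[OF assms(1)])
  fix x
  have "finite {n. xs n = x}"
    using finite_vimageI[of "{x}" xs] inj by (simp add: vimage_def)
  then have "eventually (\<lambda>n. xs n \<noteq> x) cofinite" by (simp add: eventually_cofinite)
  then show "eventually (\<lambda>n. xs n \<noteq> x) F" using assms(2) by (rule filter_leD[rotated])
qed

end

theorem theorem4p14:
  assumes "infinite (UNIV :: 'a::metric_space set)"
    and "ulf TYPE('a)"
  shows "\<exists>h :: nat set set \<Rightarrow> (('a \<Rightarrow> complex) \<Rightarrow> complex).
           inj h \<and> range h \<subseteq> higson_corona TYPE('a)"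
proof -
  obtain xs :: "nat \<Rightarrow> 'a" where "sparse_sequence xs"
    using unbounded_sparse_sequence[OF ulf_infinite_unbounded[OF assms], of "\<lambda>n. 2 * (real n + 1)"]
    by (auto simp: sparse_sequence_def mono_def)
  then interpret sparse_sequence xs .
  obtain I :: "nat set \<Rightarrow> nat set" where "independent_family I"
    using independent_family_nat by blast
  then obtain G where G: "\<And>U. ultrafilter (G U)" "\<And>U. G U \<le> cofinite"
    "\<And>U S. eventually (\<lambda>n. n \<in> I S \<longleftrightarrow> S \<in> U) (G U)"
    using independent_family_ultrafilter by metis
  have "ultralimit_character xs (G U) (sparse_indicator xs (I S)) = (if S \<in> U then 1 else 0)" for S U
    using ultralimit_sparse_indicator[OF assms(2) G(1) G(3)] .
  then have "inj (\<lambda>U. ultralimit_character xs (G U))"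
    by (intro injI) (metis set_eqI zero_neq_one)
  moreover have "ultralimit_character xs (G U) \<in> higson_corona TYPE('a)" for U
    using ultralimit_character_free_in_corona[OF G(1) G(2)] .
  ultimately show ?thesis by blast
qed

end
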